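(* Assume $\log_2 n$ and $\log_2\log_2 n$ are integers. Consider a perfect binary tree of height $h=\log_2 n-\log_2\log_2 n$ (so it has $n/\log_2 n$ leaves) in which every node stores a randomized splitter. At most $n$ processes each start at the root and repeatedly call $\mathrm{split}()$ on the splitter of their current node: on $\mathrm{stop}$ the process leaves the tree; on $\mathrm{left}$/$\mathrm{right}$ it moves to the left/right child (a process reaching a leaf node is said to visit it). Then for any (strong adaptive) adversary, with probability at least $1-1/n$ every leaf is visited by at most $4\log_2 n$ processes.
   Context: Randomized splitter: an object with a one-time operation $\mathrm{split}()$ returning $\mathrm{stop}$, $\mathrm{left}$ or $\mathrm{right}$, such that a lone caller stops, and every caller that does not stop turns left or right with probability $1/2$ each, independently of all other processes and of the schedule. A strong adaptive adversary chooses each next step based on the entire past execution, including all coin-flip outcomes. *)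

theory Defs
  imports "HOL-Probability.Probability"
begin

text \<open>
  A node of the perfect binary tree is identified by its path from the root
  (a list of directions, True = right, False = left); leaves are the paths of
  length h.  An event records that process i called split() on the splitter of
  its current node with outcome None (stop) or Some b (move to child b).
\<close>

type_synonym event = "nat \<times> bool option"
type_synonym history = "event list"

definition path_of :: "history \<Rightarrow> nat \<Rightarrow> bool list" where
  "path_of hs i = [b. (j, Some b) \<leftarrow> hs, j = i]"

definition stopped :: "history \<Rightarrow> nat \<Rightarrow> bool" where
  "stopped hs i \<longleftrightarrow> (i, None) \<in> set hs"

definition active :: "nat \<Rightarrow> nat \<Rightarrow> history \<Rightarrow> nat \<Rightarrow> bool" where
  "active h m hs i \<longleftrightarrow> i < m \<and> \<not> stopped hs i \<and> length (path_of hs i) < h"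

text \<open>
  A (strong adaptive, deterministic) adversary maps the entire past execution,
  including all coin outcomes, to the process taking the next step and to whether
  that split() call returns stop.
\<close>
type_synonym adversary = "history \<Rightarrow> nat \<times> bool"

definition step :: "nat \<Rightarrow> nat \<Rightarrow> adversary \<Rightarrow> history \<Rightarrow> history pmf" where
  "step h m A hs =
     (let (i, s) = A hs in
      if active h m hs i then
        (if s then return_pmf (hs @ [(i, None)])
         else map_pmf (\<lambda>b. hs @ [(i, Some b)]) (bernoulli_pmf (1/2)))
      else return_pmf hs)"

fun exec :: "nat \<Rightarrow> nat \<Rightarrow> adversary \<Rightarrow> nat \<Rightarrow> history pmf" where
  "exec h m A 0 = return_pmf []"
| "exec h m A (Suc N) = bind_pmf (exec h m A N) (step h m A)"

definition leaf_visits :: "nat \<Rightarrow> history \<Rightarrow> bool list \<Rightarrow> nat" where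
  "leaf_visits m hs l = card {i. i < m \<and> path_of hs i = l}"

end

theory Submission
  imports Defs
begin

text \<open>
  Fix a leaf l and let q_i be the probability that process i, continuing from its
  current node with fair coins and never stopping, would reach l.  A coin flip of
  process i on the path to l doubles q_i or sets it to 0, so the product
  \<Prod>_i (1 + 3 q_i) is a martingale under every adversary; stopping leaves it unchanged.
  The same holds for the sum over all 2^h leaves.  Initially this sum is
  2^h (1 + 3/2^h)^m \<le> 2^k e^{3k}, while a leaf visited by 4k + 1 processes forces it up
  to 4^{4k+1}.  Markov's inequality bounds the probability of the latter by 1/2^k.
\<close>

definition reach_weight :: "history \<Rightarrow> bool list \<Rightarrow> nat \<Rightarrow> real" where
  "reach_weight hs l i = (if take (length (path_of hs i)) l = path_of hs i
                          then 2 ^ length (path_of hs i) / 2 ^ length l else 0)"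

definition leaf_potential :: "nat \<Rightarrow> history \<Rightarrow> bool list \<Rightarrow> real" where
  "leaf_potential m hs l = (\<Prod>i<m. 1 + 3 * reach_weight hs l i)"

definition potential :: "nat \<Rightarrow> nat \<Rightarrow> history \<Rightarrow> real" where
  "potential h m hs = (\<Sum>l\<in>{l. length l = h}. leaf_potential m hs l)"

lemma reach_weight_nonneg: "reach_weight hs l i \<ge> 0"
  by (simp add: reach_weight_def)

lemma leaf_potential_nonneg: "leaf_potential m hs l \<ge> 0"
  unfolding leaf_potential_def by (intro prod_nonneg) (simp add: add_nonneg_nonneg reach_weight_nonneg)

lemma finite_lists_length_eq_bool: "finite {l :: bool list. length l = h}"
  using finite_lists_length_eq[of "UNIV :: bool set" h] by simp

lemma potential_nonneg: "potential h m hs \<ge> 0"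
  unfolding potential_def by (intro sum_nonneg leaf_potential_nonneg)

lemma path_of_snoc:
  "path_of (hs @ [(i, x)]) j =
     path_of hs j @ (if j = i then (case x of Some b \<Rightarrow> [b] | None \<Rightarrow> []) else [])"
  by (cases x) (auto simp: path_of_def)

lemma reach_weight_snoc_other: "j \<noteq> i \<Longrightarrow> reach_weight (hs @ [(i, x)]) l j = reach_weight hs l j"
  by (simp add: reach_weight_def path_of_snoc)

lemma reach_weight_snoc_stop: "reach_weight (hs @ [(i, None)]) l j = reach_weight hs l j"
  by (simp add: reach_weight_def path_of_snoc)

lemma reach_weight_children:
  assumes "length (path_of hs i) < length l"
  shows "reach_weight (hs @ [(i, Some True)]) l i + reach_weight (hs @ [(i, Some False)]) l i
           = 2 * reach_weight hs l i"
proof -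
  let ?p = "path_of hs i"
  have take_Suc: "take (Suc (length ?p)) l = take (length ?p) l @ [l ! length ?p]"
    using assms by (simp add: take_Suc_conv_app_nth)
  show ?thesis
  proof (cases "take (length ?p) l = ?p")
    case True
    then show ?thesis
      using take_Suc by (cases "l ! length ?p") (auto simp: reach_weight_def path_of_snoc)
  qed (use take_Suc in \<open>auto simp: reach_weight_def path_of_snoc\<close>)
qed

lemma leaf_potential_snoc_stop: "leaf_potential m (hs @ [(i, None)]) l = leaf_potential m hs l"
  by (simp add: leaf_potential_def reach_weight_snoc_stop)

lemma leaf_potential_children:
  assumes "i < m" and "length (path_of hs i) < length l"
  shows "leaf_potential m (hs @ [(i, Some True)]) l + leaf_potential m (hs @ [(i, Some False)]) l
           = 2 * leaf_potential m hs l"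
proof -
  define rest where "rest = (\<Prod>j\<in>{..<m} - {i}. 1 + 3 * reach_weight hs l j)"
  have split: "leaf_potential m hs' l = (1 + 3 * reach_weight hs' l i)
                 * (\<Prod>j\<in>{..<m} - {i}. 1 + 3 * reach_weight hs' l j)" for hs'
    unfolding leaf_potential_def using assms(1) by (simp add: prod.remove)
  have "(\<Prod>j\<in>{..<m} - {i}. 1 + 3 * reach_weight (hs @ [(i, Some b)]) l j) = rest" for b
    unfolding rest_def by (intro prod.cong) (auto simp: reach_weight_snoc_other)
  then have "leaf_potential m (hs @ [(i, Some True)]) l + leaf_potential m (hs @ [(i, Some False)]) l
      = (2 + 3 * (reach_weight (hs @ [(i, Some True)]) l i
                  + reach_weight (hs @ [(i, Some False)]) l i)) * rest"
    unfolding split by (simp add: algebra_simps)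
  then show ?thesis
    unfolding reach_weight_children[OF assms(2)] split[of hs] rest_def[symmetric]
    by (simp add: algebra_simps)
qed

lemma nn_integral_step_leaf_potential:
  assumes "length l = h"
  shows "(\<integral>\<^sup>+hs'. leaf_potential m hs' l \<partial>step h m A hs) = leaf_potential m hs l"
proof -
  obtain i s where A: "A hs = (i, s)" by force
  consider "active h m hs i" "\<not> s" | "active h m hs i" "s" | "\<not> active h m hs i"
    by blast
  then show ?thesis
  proof cases
    case 1
    then have "i < m" "length (path_of hs i) < length l"
      using assms by (auto simp: active_def)
    note children = leaf_potential_children[OF this]
    have half: "ennreal x * inverse 2 = ennreal (x / 2)" if "x \<ge> 0" for x :: real
      using that divide_ennreal[of x 2] by (simp add: divide_ennreal_def)
    from 1 A show ?thesis
      using children by (simp add: step_def half leaf_potential_nonneg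
          flip: ennreal_plus add_divide_distrib)
  qed (use A in \<open>simp_all add: step_def leaf_potential_snoc_stop\<close>)
qed

lemma nn_integral_step_potential:
  "(\<integral>\<^sup>+hs'. potential h m hs' \<partial>step h m A hs) = potential h m hs"
proof -
  have "(\<integral>\<^sup>+hs'. potential h m hs' \<partial>step h m A hs)
          = (\<Sum>l\<in>{l. length l = h}. \<integral>\<^sup>+hs'. leaf_potential m hs' l \<partial>step h m A hs)"
    unfolding potential_def
    by (simp add: leaf_potential_nonneg sum_nonneg nn_integral_sum flip: sum_ennreal)
  also have "\<dots> = potential h m hs"
    by (simp add: potential_def nn_integral_step_leaf_potential leaf_potential_nonneg
        flip: sum_ennreal)
  finally show ?thesis .
qed

lemma nn_integral_exec_invariant:
  assumes "\<And>hs. (\<integral>\<^sup>+hs'. f hs' \<partial>step h m A hs) = f hs"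
  shows "(\<integral>\<^sup>+hs. f hs \<partial>exec h m A N) = f []"
  by (induction N) (simp_all add: assms)

lemma potential_Nil: "potential h m [] = 2 ^ h * (1 + 3 / 2 ^ h) ^ m"
proof -
  have "leaf_potential m [] l = (1 + 3 / 2 ^ h) ^ m" if "length l = h" for l
    using that by (simp add: leaf_potential_def reach_weight_def path_of_def)
  moreover have "card {l :: bool list. length l = h} = 2 ^ h"
    using card_lists_length_eq[of "UNIV :: bool set" h] by simp
  ultimately show ?thesis
    by (simp add: potential_def)
qed

lemma potential_ge_if_crowded:
  assumes "length l = h" and "leaf_visits m hs l \<ge> t"
  shows "potential h m hs \<ge> 4 ^ t"
proof -
  define V where "V = {i. i < m \<and> path_of hs i = l}"
  have "V \<subseteq> {..<m}"
    by (auto simp: V_def)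
  have "(4::real) ^ t \<le> 4 ^ card V"
    using assms(2) by (intro power_increasing) (auto simp: leaf_visits_def V_def)
  also have "\<dots> = (\<Prod>i<m. if i \<in> V then 4 else 1)"
    using \<open>V \<subseteq> {..<m}\<close> by (simp add: prod.If_cases Int_absorb1 Int_absorb2)
  also have "\<dots> \<le> leaf_potential m hs l"
    unfolding leaf_potential_def
    by (intro prod_mono) (auto simp: V_def reach_weight_def reach_weight_nonneg)
  also have "\<dots> \<le> potential h m hs"
    unfolding potential_def using assms(1)
    by (intro member_le_sum finite_lists_length_eq_bool) (auto simp: leaf_potential_nonneg)
  finally show ?thesis .
qed

lemma measure_pmf_Markov:
  fixes f :: "'a \<Rightarrow> real" and M :: "'a pmf"
  assumes "c > 0" and "\<And>x. f x \<ge> 0" and "e \<ge> 0" and "(\<integral>\<^sup>+x. f x \<partial>M) \<le> ennreal e"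
  shows "measure_pmf.prob M {x. f x \<ge> c} \<le> e / c"
proof -
  have "ennreal (c * measure_pmf.prob M {x. f x \<ge> c}) = ennreal c * emeasure M {x. f x \<ge> c}"
    using assms(1) by (simp add: measure_pmf.emeasure_eq_measure ennreal_mult)
  also have "\<dots> = (\<integral>\<^sup>+x. ennreal c * indicator {x. f x \<ge> c} x \<partial>M)"
    by (simp add: nn_integral_cmult_indicator)
  also have "\<dots> \<le> (\<integral>\<^sup>+x. f x \<partial>M)"
    by (intro nn_integral_mono) (auto split: split_indicator intro: ennreal_leI)
  also have "\<dots> \<le> ennreal e"
    by (rule assms(4))
  finally have "c * measure_pmf.prob M {x. f x \<ge> c} \<le> e"
    using assms(3) by (simp add: ennreal_le_iff)
  then show ?thesis
    using assms(1) by (simp add: field_simps)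
qed

lemma one_plus_pow_le_exp: "(0::real) \<le> x \<Longrightarrow> (1 + x) ^ m \<le> exp (m * x)"
  by (metis exp_ge_add_one_self exp_of_nat_mult add_nonneg_nonneg zero_le_one power_mono)

lemma potential_Nil_le:
  assumes "m \<le> k * 2 ^ h" and "h \<le> k"
  shows "potential h m [] \<le> 54 ^ k"
proof -
  have "(1 + 3 / 2 ^ h) ^ m \<le> exp (m * (3 / 2 ^ h))"
    by (intro one_plus_pow_le_exp) simp
  also have "\<dots> \<le> exp (3 * k)"
  proof -
    have "real m \<le> real k * 2 ^ h"
      using assms(1) by (metis of_nat_le_iff of_nat_mult of_nat_numeral of_nat_power)
    then show ?thesis
      by (simp add: field_simps)
  qed
  also have "\<dots> = exp 1 ^ (3 * k)"
    by (simp flip: exp_of_nat_mult)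
  also have "\<dots> \<le> 3 ^ (3 * k)"
    by (intro power_mono exp_le) simp
  finally have "(1 + 3 / 2 ^ h) ^ m \<le> (27::real) ^ k"
    by (simp add: power_mult)
  moreover have "(2::real) ^ h \<le> 2 ^ k"
    using assms(2) by (intro power_increasing) auto
  ultimately have "potential h m [] \<le> 2 ^ k * 27 ^ k"
    unfolding potential_Nil by (intro mult_mono) auto
  then show ?thesis
    by (simp add: power_mult_distrib[symmetric])
qed

lemma pow_54_div_pow_4_le: "(54::real) ^ k / 4 ^ (4 * k + 1) \<le> 1 / 2 ^ k"
proof -
  have "(2::real) ^ k * 54 ^ k = 108 ^ k"
    by (simp flip: power_mult_distrib)
  also have "\<dots> \<le> 256 ^ k"
    by (intro power_mono) auto
  also have "\<dots> \<le> 4 ^ (4 * k + 1)"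
    by (simp add: power_add power_mult)
  finally show ?thesis
    by (simp add: field_simps)
qed

theorem lemma8:
  fixes n k j m h N :: nat and A :: adversary
  assumes "n = 2 ^ k" and "k = 2 ^ j"
    and "h = k - j"
    and "m \<le> n"
  shows "measure_pmf.prob (exec h m A N)
           {hs. \<forall>l. length l = h \<longrightarrow> leaf_visits m hs l \<le> 4 * k}
         \<ge> 1 - 1 / real n"
proof -
  let ?M = "exec h m A N" and ?c = "(4::real) ^ (4 * k + 1)"
  have "j < k" and k_eq: "k = j + h"
    using assms(2,3) less_exp by auto
  then have "m \<le> k * 2 ^ h"
    using assms(1,2,4) by (simp add: power_add)
  then have Nil: "potential h m [] \<le> 54 ^ k"
    by (rule potential_Nil_le) (simp add: k_eq)
  have "measure_pmf.prob ?M {hs. \<exists>l. length l = h \<and> leaf_visits m hs l > 4 * k}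
          \<le> measure_pmf.prob ?M {hs. potential h m hs \<ge> ?c}"
    using potential_ge_if_crowded[where t = "4 * k + 1"]
    by (intro measure_pmf.finite_measure_mono) (auto simp del: power_Suc)
  also have "\<dots> \<le> potential h m [] / ?c"
    by (intro measure_pmf_Markov potential_nonneg nn_integral_exec_invariant
        nn_integral_step_potential eq_refl) simp
  also have "\<dots> \<le> 54 ^ k / ?c"
    using Nil by (simp add: divide_right_mono)
  also have "\<dots> \<le> 1 / n"
    using pow_54_div_pow_4_le assms(1) by simp
  finally show ?thesis
    using measure_pmf.prob_compl[of "{hs. \<exists>l. length l = h \<and> leaf_visits m hs l > 4 * k}" ?M]
    by (simp add: Compl_eq_Diff_UNIV[symmetric] not_less set_diff_eq)
qed

end
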